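(* Let $G$ be a finite connected graph containing two distinct cycles, and suppose $\mathrm{cat}(G)=3$. Then $|V(G)|=6$ and $G$ consists of two vertex-disjoint triangles together with a single edge joining a vertex of one triangle to a vertex of the other.
   Context: Cat Herding is played on a simple graph $G$. The cat first places its token on a vertex. Then the players alternate, the herder moving first: the herder deletes one edge of the current graph, and then, unless the cat's current vertex has degree $0$ in the current graph, the cat moves its token along a path with at least one edge in the current graph to a different vertex. The cat is captured when its vertex has degree $0$ in the current graph, and the game ends; the score is the number of edges deleted. For a finite graph $G$ and $v\in V(G)$, $\mathrm{cat}(G,v)$ is the score under optimal play (herder minimizing, cat maximizing) when the cat starts at $v$, and $\mathrm{cat}(G)=\max_{v}\mathrm{cat}(G,v)$. *)

theory Defs
  imports Main
begin

definition simple_graph :: "'a set \<Rightarrow> 'a set set \<Rightarrow> bool" where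
  "simple_graph V E \<longleftrightarrow> finite V \<and>
     (\<forall>e\<in>E. \<exists>x y. x \<noteq> y \<and> x \<in> V \<and> y \<in> V \<and> e = {x, y})"

definition isolated :: "'a set set \<Rightarrow> 'a \<Rightarrow> bool" where
  "isolated E v \<longleftrightarrow> (\<forall>e\<in>E. v \<notin> e)"

definition reach :: "'a set set \<Rightarrow> 'a \<Rightarrow> 'a \<Rightarrow> bool" where
  "reach E v w \<longleftrightarrow> (v, w) \<in> {(x, y). x \<noteq> y \<and> {x, y} \<in> E}\<^sup>+"

definition connected_graph :: "'a set \<Rightarrow> 'a set set \<Rightarrow> bool" where
  "connected_graph V E \<longleftrightarrow> V \<noteq> {} \<and> (\<forall>x\<in>V. \<forall>y\<in>V. x = y \<or> reach E x y)"

definition is_cycle :: "'a set set \<Rightarrow> 'a set set \<Rightarrow> bool" where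
  "is_cycle E C \<longleftrightarrow> (\<exists>vs. length vs \<ge> 3 \<and> distinct vs \<and>
     (\<forall>i<length vs. {vs ! i, vs ! ((i + 1) mod length vs)} \<in> E) \<and>
     C = {{vs ! i, vs ! ((i + 1) mod length vs)} | i. i < length vs})"

text \<open>herder_wins E v k: in the position with current edge set E and the cat at v
  (herder to move), the herder can guarantee that the cat is captured after at most
  k further edge deletions.\<close>
inductive herder_wins :: "'a set set \<Rightarrow> 'a \<Rightarrow> nat \<Rightarrow> bool" where
  captured: "isolated E v \<Longrightarrow> herder_wins E v k"
| step: "e \<in> E \<Longrightarrow>
    (\<forall>w. w \<noteq> v \<and> reach (E - {e}) v w \<longrightarrow> herder_wins (E - {e}) w k) \<Longrightarrow>
    herder_wins E v (Suc k)"

definition cat_at :: "'a set set \<Rightarrow> 'a \<Rightarrow> nat" where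
  "cat_at E v = (LEAST k. herder_wins E v k)"

definition cat_num :: "'a set \<Rightarrow> 'a set set \<Rightarrow> nat" where
  "cat_num V E = Max ((\<lambda>v. cat_at E v) ` V)"

end

theory Submission
  imports Defs
begin

text \<open>
  A winning strategy of the herder restricts to every subgraph, so a graph with cat number 3
  contains none of fourteen small graphs on which the cat escapes three deletions; for each of
  them an escape is found by evaluating an executable check. Excluding them bounds the length of
  every cycle by 5 and rules out ears on a cycle (a chord, a path through new vertices between two
  of its vertices, or a second cycle through one of its vertices), so two distinct cycles are
  vertex-disjoint. A path joining them is a pendant path of both, which forces two triangles
  joined by a single edge, and the remaining excluded graphs together with connectivity forbid any
  further edge or vertex.
\<close>

section \<open>Winning positions of the herder\<close>

lemma herder_wins_mono:
  "herder_wins E v k \<Longrightarrow> k \<le> k' \<Longrightarrow> herder_wins E v k'"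
proof (induction E v k arbitrary: k' rule: herder_wins.induct)
  case (captured E v k)
  then show ?case by (simp add: herder_wins.captured)
next
  case (step e E v k)
  then obtain k'' where "k' = Suc k''" "k \<le> k''"
    by (cases k') auto
  with step show ?case
    by (auto intro: herder_wins.step)
qed

lemma herder_wins_card: "finite E \<Longrightarrow> herder_wins E v (card E)"
proof (induction "card E" arbitrary: E v)
  case 0
  then show ?case by (auto intro: herder_wins.captured simp: isolated_def)
next
  case (Suc n)
  then obtain e where "e \<in> E" by fastforce
  with Suc have "card (E - {e}) = n" by simp
  then have "herder_wins (E - {e}) w n" for w
    using Suc.hyps(1)[of "E - {e}"] Suc.prems by simp
  with \<open>e \<in> E\<close> have "herder_wins E v (Suc n)"
    by (blast intro: herder_wins.step)
  with Suc.hyps(2) show ?case by simp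
qed

lemma herder_wins_0_imp_isolated: "herder_wins E v 0 \<Longrightarrow> isolated E v"
  by (cases rule: herder_wins.cases) auto

lemma herder_wins_SucD:
  "herder_wins E v (Suc k) \<Longrightarrow> \<not> isolated E v \<Longrightarrow>
    \<exists>e\<in>E. \<forall>w. w \<noteq> v \<and> reach (E - {e}) v w \<longrightarrow> herder_wins (E - {e}) w k"
  by (cases rule: herder_wins.cases) auto

definition cat_at_most :: "'a set set \<Rightarrow> nat \<Rightarrow> bool" where
  "cat_at_most E k \<longleftrightarrow> (\<forall>v. herder_wins E v k)"

lemma simple_graph_edge_subset: "simple_graph V E \<Longrightarrow> e \<in> E \<Longrightarrow> e \<subseteq> V"
  unfolding simple_graph_def by fastforce

lemma simple_graph_finite_edges: "simple_graph V E \<Longrightarrow> finite E"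
proof -
  assume G: "simple_graph V E"
  then have "E \<subseteq> Pow V" by (auto dest: simple_graph_edge_subset)
  moreover have "finite V" using G by (simp add: simple_graph_def)
  ultimately show "finite E" by (simp add: finite_subset)
qed

lemma cat_at_most_if_cat_num_le:
  assumes G: "simple_graph V E" and le: "cat_num V E \<le> k"
  shows "cat_at_most E k"
  unfolding cat_at_most_def
proof
  fix v
  show "herder_wins E v k"
  proof (cases "v \<in> V")
    case True
    have "finite V" using G by (simp add: simple_graph_def)
    with True have "cat_at E v \<le> cat_num V E"
      unfolding cat_num_def by (intro Max_ge) auto
    with le have "cat_at E v \<le> k" by simp
    moreover have "herder_wins E v (cat_at E v)"
      unfolding cat_at_def
      using herder_wins_card[OF simple_graph_finite_edges[OF G]]
      by (rule LeastI[of "herder_wins E v"])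
    ultimately show ?thesis
      by (metis herder_wins_mono)
  next
    case False
    with G have "isolated E v"
      unfolding isolated_def using simple_graph_edge_subset by blast
    then show ?thesis by (rule herder_wins.captured)
  qed
qed

lemma reach_in_Union: "reach E a b \<Longrightarrow> a \<in> \<Union>E \<and> b \<in> \<Union>E"
  unfolding reach_def by (induction rule: trancl_induct) auto

lemma reach_trans: "reach E a b \<Longrightarrow> reach E b c \<Longrightarrow> reach E a c"
  unfolding reach_def by (rule trancl_trans)

lemma reach_edge: "a \<noteq> b \<Longrightarrow> {a, b} \<in> E \<Longrightarrow> reach E a b"
  unfolding reach_def by auto

lemma reach_image:
  assumes "reach H a b" "(\<lambda>e. g ` e) ` H \<subseteq> E" "inj_on g (\<Union>H)"
  shows "reach E (g a) (g b)"
proof -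
  have edge: "g x \<noteq> g y \<and> {g x, g y} \<in> E" if "x \<noteq> y" "{x, y} \<in> H" for x y
  proof
    from that assms(3) show "g x \<noteq> g y"
      by (metis UnionI insertCI inj_on_contraD)
    from that assms(2) show "{g x, g y} \<in> E" by auto
  qed
  from assms(1) show ?thesis
    unfolding reach_def
  proof (induction rule: trancl_induct)
    case (base b)
    with edge show ?case by auto
  next
    case (step b c)
    with edge have "(g b, g c) \<in> {(x, y). x \<noteq> y \<and> {x, y} \<in> E}" by simp
    with step.IH show ?case by (rule trancl_into_trancl)
  qed
qed

lemma herder_wins_subgraph:
  assumes "herder_wins E v k" "inj_on g (\<Union>H \<union> {u})" "g u = v" "(\<lambda>e. g ` e) ` H \<subseteq> E"
  shows "herder_wins H u k"
  using assms
proof (induction E v k arbitrary: H u rule: herder_wins.induct)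
  case (captured E v k)
  then have "isolated H u"
    unfolding isolated_def by blast
  then show ?case by (rule herder_wins.captured)
next
  case (step e E v k)
  show ?case
  proof (cases "H = {}")
    case True
    then show ?thesis by (simp add: herder_wins.captured isolated_def)
  next
    case False
    have inj: "inj_on g (\<Union>H)"
      using step.prems(1) by (rule inj_on_subset) blast
    \<comment> \<open>delete the preimage of \<open>e\<close> if there is one, and an arbitrary edge otherwise\<close>
    have "\<exists>h\<in>H. (\<lambda>e. g ` e) ` (H - {h}) \<subseteq> E - {e}"
    proof (cases "\<exists>h\<in>H. g ` h = e")
      case True
      then obtain h where h: "h \<in> H" "g ` h = e" ..
      have "g ` h' \<noteq> e" if "h' \<in> H - {h}" for h'
        using that h inj by (metis DiffE Union_upper inj_on_image_eq_iff singletonI)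
      with step.prems(3) have "(\<lambda>e. g ` e) ` (H - {h}) \<subseteq> E - {e}" by auto
      with h(1) show ?thesis ..
    next
      case False
      with \<open>H \<noteq> {}\<close> step.prems(3) show ?thesis by blast
    qed
    then obtain h where h: "h \<in> H" and img: "(\<lambda>e. g ` e) ` (H - {h}) \<subseteq> E - {e}" ..
    show ?thesis
    proof (rule herder_wins.step[OF h], intro allI impI)
      fix w
      assume w: "w \<noteq> u \<and> reach (H - {h}) u w"
      then have uw: "u \<in> \<Union>H" "w \<in> \<Union>H"
        using reach_in_Union by fastforce+
      have "inj_on g (\<Union>(H - {h}))"
        using inj by (rule inj_on_subset) blast
      with w img step.prems(2) have "reach (E - {e}) v (g w)"
        using reach_image by metis
      moreover have "g w \<noteq> v"
        using w uw step.prems(1,2) by (metis UnI1 inj_on_contraD)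
      ultimately have "\<forall>H' u'. inj_on g (\<Union>H' \<union> {u'}) \<longrightarrow> g u' = g w \<longrightarrow>
          (\<lambda>e. g ` e) ` H' \<subseteq> E - {e} \<longrightarrow> herder_wins H' u' k"
        using step.IH by blast
      moreover have "inj_on g (\<Union>(H - {h}) \<union> {w})"
        using step.prems(1) by (rule inj_on_subset) (use uw in blast)
      ultimately show "herder_wins (H - {h}) w k"
        using img by blast
    qed
  qed
qed

section \<open>Escapes of the cat certified by evaluation\<close>

definition edge_set :: "(nat \<times> nat) list \<Rightarrow> nat set set" where
  "edge_set es = (\<lambda>(a, b). {a, b}) ` set es"

definition remove_edge :: "nat \<times> nat \<Rightarrow> (nat \<times> nat) list \<Rightarrow> (nat \<times> nat) list" where
  "remove_edge e es = filter (\<lambda>(a, b). \<not> (a = fst e \<and> b = snd e \<or> a = snd e \<and> b = fst e)) es"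

definition neighbours :: "(nat \<times> nat) list \<Rightarrow> nat \<Rightarrow> nat list" where
  "neighbours es x = map snd (filter (\<lambda>(a, b). a = x) es) @ map fst (filter (\<lambda>(a, b). b = x) es)"

definition cat_moves :: "(nat \<times> nat) list \<Rightarrow> nat \<Rightarrow> nat list" where
  "cat_moves es v = concat (map (\<lambda>w. w # neighbours es w) (neighbours es v))"

text \<open>A sufficient, executable test for the cat at \<open>v\<close> to survive \<open>k\<close> more deletions: the
  cat only considers moves to vertices at distance one or two.\<close>
fun escapes :: "nat \<Rightarrow> (nat \<times> nat) list \<Rightarrow> nat \<Rightarrow> bool" where
  "escapes 0 es v \<longleftrightarrow> neighbours es v \<noteq> []"
| "escapes (Suc k) es v \<longleftrightarrow> neighbours es v \<noteq> [] \<and>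
     (\<forall>e\<in>set es. let es' = remove_edge e es in
        \<exists>w\<in>set (cat_moves es' v). w \<noteq> v \<and> escapes k es' w)"

lemma edge_set_remove_edge: "edge_set (remove_edge e es) = edge_set es - {{fst e, snd e}}"
proof -
  have "{a, b} = {fst e, snd e} \<longleftrightarrow> a = fst e \<and> b = snd e \<or> a = snd e \<and> b = fst e" for a b :: nat
    by (rule doubleton_eq_iff)
  then show ?thesis
    unfolding edge_set_def remove_edge_def by fastforce
qed

lemma set_neighbours: "set (neighbours es x) = {b. (x, b) \<in> set es} \<union> {a. (a, x) \<in> set es}"
  unfolding neighbours_def by force

lemma neighbours_reach:
  assumes "w \<in> set (neighbours es v)"
  shows "w = v \<or> reach (edge_set es) v w"
proof -
  from assms have "(v, w) \<in> set es \<or> (w, v) \<in> set es"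
    by (simp add: set_neighbours)
  then have "{v, w} \<in> edge_set es"
    unfolding edge_set_def by (metis (no_types, lifting) case_prod_conv image_eqI insert_commute)
  then show ?thesis
    by (metis reach_edge)
qed

lemma not_isolated_if_neighbours:
  assumes "neighbours es v \<noteq> []"
  shows "\<not> isolated (edge_set es) v"
proof -
  from assms obtain w where "w \<in> set (neighbours es v)"
    by (metis last_in_set)
  then have "(v, w) \<in> set es \<or> (w, v) \<in> set es"
    by (simp add: set_neighbours)
  then have "\<exists>e\<in>edge_set es. v \<in> e"
    unfolding edge_set_def by force
  then show ?thesis
    unfolding isolated_def by blast
qed

lemma cat_moves_reach:
  assumes "w \<in> set (cat_moves es v)" "w \<noteq> v"
  shows "reach (edge_set es) v w"
proof -
  from assms(1) obtain x where x: "x \<in> set (neighbours es v)" "w = x \<or> w \<in> set (neighbours es x)"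
    unfolding cat_moves_def by auto
  from x(1) have "x = v \<or> reach (edge_set es) v x"
    by (rule neighbours_reach)
  moreover from x(2) have "w = x \<or> reach (edge_set es) x w"
    using neighbours_reach by blast
  ultimately show ?thesis
    using assms(2) by (metis reach_trans)
qed

lemma escapes_imp_not_herder_wins:
  "escapes k es v \<Longrightarrow> \<not> herder_wins (edge_set es) v k"
proof (induction k arbitrary: es v)
  case 0
  then show ?case
    by (auto dest: not_isolated_if_neighbours herder_wins_0_imp_isolated)
next
  case (Suc k)
  show ?case
  proof
    assume "herder_wins (edge_set es) v (Suc k)"
    moreover have "\<not> isolated (edge_set es) v"
      using Suc.prems by (simp add: not_isolated_if_neighbours)
    ultimately obtain e where "e \<in> edge_set es" and
      wins: "\<forall>w. w \<noteq> v \<and> reach (edge_set es - {e}) v w \<longrightarrow> herder_wins (edge_set es - {e}) w k"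
      by (blast dest: herder_wins_SucD)
    then obtain a b where ab: "(a, b) \<in> set es" "e = {a, b}"
      unfolding edge_set_def by auto
    define es' where "es' = remove_edge (a, b) es"
    from ab(1) Suc.prems obtain w where w: "w \<in> set (cat_moves es' v)" "w \<noteq> v" "escapes k es' w"
      unfolding es'_def by (auto simp: Let_def)
    have "edge_set es' = edge_set es - {e}"
      using ab(2) by (simp add: es'_def edge_set_remove_edge)
    moreover from w have "reach (edge_set es') v w"
      by (simp add: cat_moves_reach)
    ultimately have "herder_wins (edge_set es') w k"
      using wins w(2) by simp
    with Suc.IH w(3) show False by blast
  qed
qed

lemma not_cat_at_most_if_escapes:
  assumes cat: "cat_at_most E k" and esc: "escapes k es u" and "distinct xs" "u < length xs"
    and emb: "list_all (\<lambda>(i, j). i < length xs \<and> j < length xs \<and> {xs ! i, xs ! j} \<in> E) es"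
  shows False
proof -
  have "\<Union>(edge_set es) \<union> {u} \<subseteq> {..<length xs}"
    using emb \<open>u < length xs\<close> unfolding edge_set_def list_all_iff by auto
  then have inj: "inj_on (nth xs) (\<Union>(edge_set es) \<union> {u})"
    using \<open>distinct xs\<close> inj_on_nth by (metis inj_on_subset lessThan_iff subsetD)
  have img: "(\<lambda>e. (!) xs ` e) ` edge_set es \<subseteq> E"
    using emb unfolding edge_set_def list_all_iff by auto
  have "herder_wins E (xs ! u) k"
    using cat by (simp add: cat_at_most_def)
  then have "herder_wins (edge_set es) u k"
    using herder_wins_subgraph[OF _ inj refl img] by blast
  with esc show False
    using escapes_imp_not_herder_wins by blast
qed

lemma no_diamond:
  assumes "cat_at_most E 3" "distinct [a, b, c, d]"
    and "{a, b} \<in> E" "{b, c} \<in> E" "{c, d} \<in> E" "{d, a} \<in> E" "{a, c} \<in> E"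
  shows False
  by (rule not_cat_at_most_if_escapes[OF assms(1) _ assms(2),
        where es = "[(0, 1), (1, 2), (2, 3), (3, 0), (0, 2)]" and u = 0])
    (code_simp, simp_all add: assms)

lemma no_house:
  assumes "cat_at_most E 3" "distinct [a, b, c, d, e]"
    and "{a, b} \<in> E" "{b, c} \<in> E" "{c, d} \<in> E" "{d, e} \<in> E" "{e, a} \<in> E" "{a, c} \<in> E"
  shows False
  by (rule not_cat_at_most_if_escapes[OF assms(1) _ assms(2),
        where es = "[(0, 1), (1, 2), (2, 3), (3, 4), (4, 0), (0, 2)]" and u = 0])
    (code_simp, simp_all add: assms)

lemma no_bowtie:
  assumes "cat_at_most E 3" "distinct [a, b, c, d, e]"
    and "{a, b} \<in> E" "{b, c} \<in> E" "{c, a} \<in> E" "{c, d} \<in> E" "{d, e} \<in> E" "{e, c} \<in> E"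
  shows False
  by (rule not_cat_at_most_if_escapes[OF assms(1) _ assms(2),
        where es = "[(0, 1), (1, 2), (2, 0), (2, 3), (3, 4), (4, 2)]" and u = 0])
    (code_simp, simp_all add: assms)

lemma no_K23:
  assumes "cat_at_most E 3" "distinct [a, b, x, y, z]"
    and "{a, x} \<in> E" "{a, y} \<in> E" "{a, z} \<in> E" "{b, x} \<in> E" "{b, y} \<in> E" "{b, z} \<in> E"
  shows False
  by (rule not_cat_at_most_if_escapes[OF assms(1) _ assms(2),
        where es = "[(0, 2), (0, 3), (0, 4), (1, 2), (1, 3), (1, 4)]" and u = 0])
    (code_simp, simp_all add: assms)

lemma no_cycle6:
  assumes "cat_at_most E 3" "distinct [v0, v1, v2, v3, v4, v5]"
    and "{v0, v1} \<in> E" "{v1, v2} \<in> E" "{v2, v3} \<in> E" "{v3, v4} \<in> E" "{v4, v5} \<in> E" "{v5, v0} \<in> E"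
  shows False
  by (rule not_cat_at_most_if_escapes[OF assms(1) _ assms(2),
        where es = "[(0, 1), (1, 2), (2, 3), (3, 4), (4, 5), (5, 0)]" and u = 0])
    (code_simp, simp_all add: assms)

lemma no_cycle7:
  assumes "cat_at_most E 3" "distinct [v0, v1, v2, v3, v4, v5, v6]"
    and "{v0, v1} \<in> E" "{v1, v2} \<in> E" "{v2, v3} \<in> E" "{v3, v4} \<in> E"
      "{v4, v5} \<in> E" "{v5, v6} \<in> E" "{v6, v0} \<in> E"
  shows False
  by (rule not_cat_at_most_if_escapes[OF assms(1) _ assms(2),
        where es = "[(0, 1), (1, 2), (2, 3), (3, 4), (4, 5), (5, 6), (6, 0)]" and u = 0])
    (code_simp, simp_all add: assms)

lemma no_cycle8:
  assumes "cat_at_most E 3" "distinct [v0, v1, v2, v3, v4, v5, v6, v7]"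
    and "{v0, v1} \<in> E" "{v1, v2} \<in> E" "{v2, v3} \<in> E" "{v3, v4} \<in> E"
      "{v4, v5} \<in> E" "{v5, v6} \<in> E" "{v6, v7} \<in> E" "{v7, v0} \<in> E"
  shows False
  by (rule not_cat_at_most_if_escapes[OF assms(1) _ assms(2),
        where es = "[(0, 1), (1, 2), (2, 3), (3, 4), (4, 5), (5, 6), (6, 7), (7, 0)]" and u = 0])
    (code_simp, simp_all add: assms)

lemma no_path9:
  assumes "cat_at_most E 3" "distinct [v0, v1, v2, v3, v4, v5, v6, v7, v8]"
    and "{v0, v1} \<in> E" "{v1, v2} \<in> E" "{v2, v3} \<in> E" "{v3, v4} \<in> E"
      "{v4, v5} \<in> E" "{v5, v6} \<in> E" "{v6, v7} \<in> E" "{v7, v8} \<in> E"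
  shows False
  by (rule not_cat_at_most_if_escapes[OF assms(1) _ assms(2),
        where es = "[(0, 1), (1, 2), (2, 3), (3, 4), (4, 5), (5, 6), (6, 7), (7, 8)]" and u = 4])
    (code_simp, simp_all add: assms)

lemma no_cycle4_pendant_path2:
  assumes "cat_at_most E 3" "distinct [a, b, c, d, p, q]"
    and "{a, b} \<in> E" "{b, c} \<in> E" "{c, d} \<in> E" "{d, a} \<in> E" "{a, p} \<in> E" "{p, q} \<in> E"
  shows False
  by (rule not_cat_at_most_if_escapes[OF assms(1) _ assms(2),
        where es = "[(0, 1), (1, 2), (2, 3), (3, 0), (0, 4), (4, 5)]" and u = 1])
    (code_simp, simp_all add: assms)

lemma no_cycle5_pendant_edge:
  assumes "cat_at_most E 3" "distinct [a, b, c, d, e, p]"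
    and "{a, b} \<in> E" "{b, c} \<in> E" "{c, d} \<in> E" "{d, e} \<in> E" "{e, a} \<in> E" "{a, p} \<in> E"
  shows False
  by (rule not_cat_at_most_if_escapes[OF assms(1) _ assms(2),
        where es = "[(0, 1), (1, 2), (2, 3), (3, 4), (4, 0), (0, 5)]" and u = 2])
    (code_simp, simp_all add: assms)

lemma no_triangle_pendant_path5:
  assumes "cat_at_most E 3" "distinct [a, b, c, p1, p2, p3, p4, p5]"
    and "{a, b} \<in> E" "{b, c} \<in> E" "{c, a} \<in> E" "{a, p1} \<in> E"
      "{p1, p2} \<in> E" "{p2, p3} \<in> E" "{p3, p4} \<in> E" "{p4, p5} \<in> E"
  shows False
  by (rule not_cat_at_most_if_escapes[OF assms(1) _ assms(2),
        where es = "[(0, 1), (1, 2), (2, 0), (0, 3), (3, 4), (4, 5), (5, 6), (6, 7)]" and u = 3])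
    (code_simp, simp_all add: assms)

lemma no_triangles_joined_by_path2:
  assumes "cat_at_most E 3" "distinct [a, b, c, m, x, y, z]"
    and "{a, b} \<in> E" "{b, c} \<in> E" "{c, a} \<in> E" "{a, m} \<in> E"
      "{m, x} \<in> E" "{x, y} \<in> E" "{y, z} \<in> E" "{z, x} \<in> E"
  shows False
  by (rule not_cat_at_most_if_escapes[OF assms(1) _ assms(2),
        where es = "[(0, 1), (1, 2), (2, 0), (0, 3), (3, 4), (4, 5), (5, 6), (6, 4)]" and u = 3])
    (code_simp, simp_all add: assms)

lemma no_triangle_pendant_edge_and_path2:
  assumes "cat_at_most E 3" "distinct [a, b, c, p, q, r]"
    and "{a, b} \<in> E" "{b, c} \<in> E" "{c, a} \<in> E" "{a, p} \<in> E" "{b, q} \<in> E" "{q, r} \<in> E"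
  shows False
  by (rule not_cat_at_most_if_escapes[OF assms(1) _ assms(2),
        where es = "[(0, 1), (1, 2), (2, 0), (0, 3), (1, 4), (4, 5)]" and u = 0])
    (code_simp, simp_all add: assms)

lemma no_triangle_pendant_edge_and_path3:
  assumes "cat_at_most E 3" "distinct [a, b, c, p, q, r, s]"
    and "{a, b} \<in> E" "{b, c} \<in> E" "{c, a} \<in> E" "{a, p} \<in> E" "{a, q} \<in> E" "{q, r} \<in> E" "{r, s} \<in> E"
  shows False
  by (rule not_cat_at_most_if_escapes[OF assms(1) _ assms(2),
        where es = "[(0, 1), (1, 2), (2, 0), (0, 3), (0, 4), (4, 5), (5, 6)]" and u = 0])
    (code_simp, simp_all add: assms)

section \<open>Walks and cycles\<close>

abbreviation walk :: "'a set set \<Rightarrow> 'a list \<Rightarrow> bool" where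
  "walk E \<equiv> successively (\<lambda>x y. x \<noteq> y \<and> {x, y} \<in> E)"

lemma walk_rev: "walk E (rev xs) \<longleftrightarrow> walk E xs"
  by (induction xs) (auto simp: successively_append_iff successively_Cons insert_commute last_rev)

lemma walk_infix: "walk E (xs @ ys @ zs) \<Longrightarrow> walk E ys"
  by (simp add: successively_append_iff)

lemma walk_prefix: "walk E (xs @ ys) \<Longrightarrow> walk E xs"
  by (simp add: successively_append_iff)

lemma walk_join: "walk E (xs @ [y]) \<Longrightarrow> walk E (y # ys) \<Longrightarrow> walk E (xs @ y # ys)"
  by (cases ys) (auto simp: successively_append_iff)

lemma walk_of_reach:
  assumes "reach E a b"
  obtains ps where "walk E (a # ps)" "ps \<noteq> []" "last ps = b"
proof -
  from assms have "\<exists>ps. walk E (a # ps) \<and> ps \<noteq> [] \<and> last ps = b"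
    unfolding reach_def
  proof (induction rule: trancl_induct)
    case (base b)
    then show ?case by (intro exI[of _ "[b]"]) simp
  next
    case (step b c)
    then obtain ps where "walk E (a # ps)" "ps \<noteq> []" "last ps = b" by blast
    with step.hyps(2) have "walk E (a # ps @ [c])"
      using successively_append_iff[of _ "a # ps" "[c]"] by simp
    then show ?case by (intro exI[of _ "ps @ [c]"]) simp
  qed
  with that show ?thesis by blast
qed

lemma walk_shortcut:
  assumes "walk E xs" "xs \<noteq> []"
  shows "\<exists>ys. walk E ys \<and> distinct ys \<and> ys \<noteq> [] \<and> hd ys = hd xs \<and> last ys = last xs \<and>
    set ys \<subseteq> set xs"
  using assms
proof (induction "length xs" arbitrary: xs rule: less_induct)
  case less
  show ?case
  proof (cases "distinct xs")
    case True
    with less.prems show ?thesis by blast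
  next
    case False
    then obtain as y bs cs where xs: "xs = as @ [y] @ bs @ [y] @ cs"
      using not_distinct_decomp by blast
    let ?xs = "as @ [y] @ cs"
    have "walk E (as @ [y])" "walk E (y # cs)"
      using less.prems(1) walk_infix[of E "[]" "as @ [y]" "bs @ [y] @ cs"]
        walk_infix[of E "as @ [y] @ bs" "y # cs" "[]"]
      unfolding xs by simp_all
    then have "walk E ?xs"
      by (simp add: walk_join)
    moreover have "length ?xs < length xs"
      unfolding xs by simp
    ultimately obtain ys where ys: "walk E ys" "distinct ys" "ys \<noteq> []" "hd ys = hd ?xs"
      "last ys = last ?xs" "set ys \<subseteq> set ?xs"
      using less.hyps[of ?xs] by auto
    have "hd ?xs = hd xs"
      unfolding xs by (cases as) auto
    moreover have "last ?xs = last xs"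
      unfolding xs by (cases cs rule: rev_cases) auto
    moreover have "set ?xs \<subseteq> set xs"
      unfolding xs by auto
    ultimately show ?thesis
      using ys by (intro exI[of _ ys]) auto
  qed
qed

lemma walk_between_disjoint_sets:
  assumes "A \<inter> B = {}" "walk E xs" "xs \<noteq> []" "hd xs \<in> A" "last xs \<in> B"
  obtains a ps b where "a \<in> A" "b \<in> B" "set ps \<inter> (A \<union> B) = {}"
    "distinct (a # ps @ [b])" "walk E (a # ps @ [b])"
proof -
  from assms(3,4) have "\<exists>z\<in>set xs. z \<in> A"
    using hd_in_set by blast
  then obtain as a rs where xs: "xs = as @ a # rs" "a \<in> A" "\<forall>z\<in>set rs. z \<notin> A"
    using split_list_last_prop[of xs "\<lambda>z. z \<in> A"] by blast
  have "last (a # rs) \<in> B"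
    using assms(5) xs(1) by simp
  moreover have "a \<notin> B"
    using assms(1) xs(2) by blast
  ultimately have "rs \<noteq> []" "last rs \<in> B"
    by (auto split: if_splits)
  then have "\<exists>z\<in>set rs. z \<in> B"
    using last_in_set by blast
  then obtain ms b cs where rs: "rs = ms @ b # cs" "b \<in> B" "\<forall>z\<in>set ms. z \<notin> B"
    using split_list_first_prop[of rs "\<lambda>z. z \<in> B"] by blast
  have "walk E (a # ms @ [b])"
    using assms(2) walk_infix[of E as "a # ms @ [b]" cs] unfolding xs(1) rs(1) by simp
  then obtain ys where ys: "walk E ys" "distinct ys" "ys \<noteq> []" "hd ys = a" "last ys = b"
    "set ys \<subseteq> set (a # ms @ [b])"
    using walk_shortcut[of E "a # ms @ [b]"] by auto
  have "a \<noteq> b"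
    using assms(1) xs(2) rs(2) by blast
  have "ys = a # tl ys"
    using ys(3,4) by (metis list.collapse)
  moreover have "tl ys \<noteq> []"
    using calculation ys(5) \<open>a \<noteq> b\<close> by (metis last_ConsL)
  ultimately obtain ps where ps: "ys = a # ps @ [b]"
    using ys(5) by (metis append_butlast_last_id last_ConsR)
  have "set ps \<subseteq> set ms"
    using ys(2,6) unfolding ps by auto
  moreover have "set ms \<inter> (A \<union> B) = {}"
    using xs(3) rs(1,3) by auto
  ultimately have "set ps \<inter> (A \<union> B) = {}"
    by blast
  with that xs(2) rs(2) ys(1,2) show ?thesis
    unfolding ps by blast
qed

lemma edge_leaving_if_connected:
  assumes "connected_graph V E" "p \<in> S" "q \<in> V" "q \<notin> S" "S \<subseteq> V"
  obtains x y where "x \<in> S" "y \<notin> S" "{x, y} \<in> E"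
proof -
  have "p \<in> V" "p \<noteq> q"
    using assms(2,4,5) by auto
  with assms(1,3) have "reach E p q"
    unfolding connected_graph_def by blast
  then obtain ps where ps: "walk E (p # ps)" "ps \<noteq> []" "last ps = q"
    by (rule walk_of_reach)
  \<comment> \<open>no vertex avoids both \<open>S\<close> and \<open>- S\<close>, so the path found is a single edge\<close>
  have "S \<inter> - S = {}" by simp
  then obtain x ms y where "x \<in> S" "y \<in> - S" "set ms \<inter> (S \<union> - S) = {}" "walk E (x # ms @ [y])"
    by (rule walk_between_disjoint_sets[where xs = "p # ps"]) (use ps assms(2,4) in auto)
  with that show ?thesis by auto
qed

fun walk_edges :: "'a list \<Rightarrow> 'a set set" where
  "walk_edges (x # y # zs) = insert {x, y} (walk_edges (y # zs))"
| "walk_edges _ = {}"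

definition cycle :: "'a set set \<Rightarrow> 'a list \<Rightarrow> bool" where
  "cycle E vs \<longleftrightarrow> 3 \<le> length vs \<and> distinct vs \<and> walk E (vs @ [hd vs])"

definition cycle_edges :: "'a list \<Rightarrow> 'a set set" where
  "cycle_edges vs = walk_edges (vs @ [hd vs])"

lemma walk_edges_snoc: "walk_edges (xs @ [a, b]) = insert {a, b} (walk_edges (xs @ [a]))"
  by (induction xs rule: walk_edges.induct) auto

lemma walk_edges_subset_set: "e \<in> walk_edges xs \<Longrightarrow> e \<subseteq> set xs"
  by (induction xs rule: walk_edges.induct) auto

lemma cycle_edges_subset_set:
  assumes "e \<in> cycle_edges vs"
  shows "e \<subseteq> set vs"
proof -
  from assms have "vs \<noteq> []"
    unfolding cycle_edges_def by (cases vs) auto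
  moreover from assms have "e \<subseteq> set (vs @ [hd vs])"
    unfolding cycle_edges_def by (rule walk_edges_subset_set)
  ultimately show ?thesis
    by (simp add: insert_absorb)
qed

lemma walk_edges_conv_nth: "walk_edges xs = {{xs ! i, xs ! Suc i} | i. Suc i < length xs}"
proof (induction xs rule: walk_edges.induct)
  case (1 x y zs)
  have "{{(x # y # zs) ! i, (x # y # zs) ! Suc i} | i. Suc i < length (x # y # zs)} =
      insert {x, y} {{(y # zs) ! i, (y # zs) ! Suc i} | i. Suc i < length (y # zs)}"
    (is "?L = ?R")
  proof
    show "?L \<subseteq> ?R"
    proof
      fix e
      assume "e \<in> ?L"
      then obtain i where i: "Suc i < length (x # y # zs)"
        "e = {(x # y # zs) ! i, (x # y # zs) ! Suc i}"
        by blast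
      then show "e \<in> ?R"
        by (cases i) auto
    qed
    show "?R \<subseteq> ?L"
    proof
      fix e
      assume "e \<in> ?R"
      then consider "e = {x, y}"
        | i where "Suc i < length (y # zs)" "e = {(y # zs) ! i, (y # zs) ! Suc i}"
        by blast
      then show "e \<in> ?L"
      proof cases
        case 1
        then show ?thesis by (auto intro!: exI[of _ 0])
      next
        case 2
        then show ?thesis by (auto intro!: exI[of _ "Suc i"])
      qed
    qed
  qed
  with 1 show ?case by simp
qed auto

lemma nth_append_hd:
  assumes "i < length vs"
  shows "(vs @ [hd vs]) ! i = vs ! i" "(vs @ [hd vs]) ! Suc i = vs ! ((i + 1) mod length vs)"
proof -
  show "(vs @ [hd vs]) ! i = vs ! i"
    using assms by (simp add: nth_append)
  show "(vs @ [hd vs]) ! Suc i = vs ! ((i + 1) mod length vs)"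
  proof (cases "Suc i < length vs")
    case True
    then show ?thesis by (simp add: nth_append)
  next
    case False
    with assms have "Suc i = length vs" "vs \<noteq> []" by auto
    then show ?thesis by (simp add: nth_append hd_conv_nth)
  qed
qed

lemma cycle_edges_conv_nth:
  "cycle_edges vs = {{vs ! i, vs ! ((i + 1) mod length vs)} | i. i < length vs}"
proof -
  have "cycle_edges vs = (\<lambda>i. {(vs @ [hd vs]) ! i, (vs @ [hd vs]) ! Suc i}) ` {..<length vs}"
    unfolding cycle_edges_def walk_edges_conv_nth by auto
  also have "\<dots> = (\<lambda>i. {vs ! i, vs ! ((i + 1) mod length vs)}) ` {..<length vs}"
    by (rule image_cong) (simp_all add: nth_append_hd)
  finally show ?thesis by auto
qed

lemma walk_closed_conv_nth:
  "walk E (vs @ [hd vs]) \<longleftrightarrow>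
    (\<forall>i < length vs. vs ! i \<noteq> vs ! ((i + 1) mod length vs) \<and>
      {vs ! i, vs ! ((i + 1) mod length vs)} \<in> E)"
  unfolding successively_conv_nth using nth_append_hd by force

lemma cycle_if_is_cycle:
  assumes "is_cycle E C"
  obtains vs where "cycle E vs" "C = cycle_edges vs"
proof -
  from assms obtain vs where vs: "3 \<le> length vs" "distinct vs"
    "\<forall>i<length vs. {vs ! i, vs ! ((i + 1) mod length vs)} \<in> E"
    "C = {{vs ! i, vs ! ((i + 1) mod length vs)} | i. i < length vs}"
    unfolding is_cycle_def by blast
  have "vs ! i \<noteq> vs ! ((i + 1) mod length vs)" if "i < length vs" for i
  proof -
    have "(i + 1) mod length vs \<noteq> i"
    proof (cases "Suc i < length vs")
      case False
      with that have "Suc i = length vs" by simp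
      with vs(1) show ?thesis by simp
    qed simp
    moreover have "(i + 1) mod length vs < length vs"
      using that by (metis mod_less_divisor not_less_zero not_gr_zero)
    ultimately show ?thesis
      using that vs(2) by (simp add: nth_eq_iff_index_eq)
  qed
  with vs have "cycle E vs"
    unfolding cycle_def walk_closed_conv_nth by blast
  moreover have "C = cycle_edges vs"
    using vs(4) by (simp add: cycle_edges_conv_nth)
  ultimately show ?thesis by (rule that)
qed

lemma cycle_rotate1:
  assumes "cycle E vs"
  shows "cycle E (rotate1 vs) \<and> cycle_edges (rotate1 vs) = cycle_edges vs"
proof -
  obtain x y zs where vs: "vs = x # y # zs"
    using assms unfolding cycle_def by (metis Suc_le_length_iff numeral_3_eq_3)
  have "walk E (y # zs @ [x, y]) \<longleftrightarrow> walk E (y # zs @ [x]) \<and> x \<noteq> y \<and> {x, y} \<in> E"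
    using successively_append_iff[of _ "y # zs @ [x]" "[y]"] by simp
  then have "walk E (y # zs @ [x, y]) \<longleftrightarrow> walk E (x # y # zs @ [x])"
    by auto
  moreover have "cycle_edges (y # zs @ [x]) = cycle_edges (x # y # zs)"
    unfolding cycle_edges_def using walk_edges_snoc[of "y # zs" x y] by (simp add: insert_commute)
  ultimately show ?thesis
    using assms unfolding vs cycle_def by auto
qed

lemma cycle_rotate:
  "cycle E vs \<Longrightarrow> cycle E (rotate n vs) \<and> cycle_edges (rotate n vs) = cycle_edges vs"
proof (induction n)
  case (Suc n)
  then show ?case
    using cycle_rotate1[of E "rotate n vs"] by simp
qed simp

lemma cycle_rotate_to:
  assumes "cycle E vs" "x \<in> set vs"
  obtains rest where "cycle E (x # rest)" "cycle_edges (x # rest) = cycle_edges vs"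
    "set (x # rest) = set vs" "length (x # rest) = length vs"
proof -
  from assms(2) obtain i where i: "i < length vs" "vs ! i = x"
    by (auto simp: in_set_conv_nth)
  then have "vs \<noteq> []" by auto
  with i have "rotate i vs \<noteq> []" "hd (rotate i vs) = x"
    by (simp_all add: hd_rotate_conv_nth)
  then have r: "rotate i vs = x # tl (rotate i vs)"
    by (metis list.collapse)
  show ?thesis
  proof (rule that)
    show "cycle E (x # tl (rotate i vs))" "cycle_edges (x # tl (rotate i vs)) = cycle_edges vs"
      using cycle_rotate[OF assms(1), of i] r by simp_all
    show "set (x # tl (rotate i vs)) = set vs" "length (x # tl (rotate i vs)) = length vs"
      using set_rotate[of i vs] length_rotate[of i vs] r by simp_all
  qed
qed

section \<open>Graphs with cat number at most 3\<close>

lemma cycle_length_le_5: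
  assumes cat: "cat_at_most E 3" and "cycle E vs"
  shows "length vs \<le> 5"
proof (rule ccontr)
  assume long: "\<not> length vs \<le> 5"
  have d: "distinct vs" and w: "walk E (vs @ [hd vs])"
    using assms(2) by (auto simp: cycle_def)
  consider "length vs = 6" | "length vs = 7" | "length vs = 8" | "9 \<le> length vs"
    using long by linarith
  then show False
  proof cases
    case 1
    then obtain v0 v1 v2 v3 v4 v5 where vs: "vs = [v0, v1, v2, v3, v4, v5]"
      by (auto simp: length_Suc_conv numeral_eq_Suc)
    show False
      by (rule no_cycle6[OF cat, of v0 v1 v2 v3 v4 v5]) (use d w in \<open>simp_all add: vs\<close>)
  next
    case 2
    then obtain v0 v1 v2 v3 v4 v5 v6 where vs: "vs = [v0, v1, v2, v3, v4, v5, v6]"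
      by (auto simp: length_Suc_conv numeral_eq_Suc)
    show False
      by (rule no_cycle7[OF cat, of v0 v1 v2 v3 v4 v5 v6]) (use d w in \<open>simp_all add: vs\<close>)
  next
    case 3
    then obtain v0 v1 v2 v3 v4 v5 v6 v7 where vs: "vs = [v0, v1, v2, v3, v4, v5, v6, v7]"
      by (auto simp: length_Suc_conv numeral_eq_Suc)
    show False
      by (rule no_cycle8[OF cat, of v0 v1 v2 v3 v4 v5 v6 v7]) (use d w in \<open>simp_all add: vs\<close>)
  next
    case 4
    define zs where "zs = take 9 vs"
    have "vs @ [hd vs] = [] @ zs @ drop 9 vs @ [hd vs]"
      unfolding zs_def by (metis append_take_drop_id append.assoc append_Nil)
    with d w have "distinct zs" "walk E zs"
      using walk_infix[of E "[]" zs "drop 9 vs @ [hd vs]"] by (simp_all add: zs_def)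
    moreover from 4 have "length zs = 9"
      by (simp add: zs_def)
    then obtain v0 v1 v2 v3 v4 v5 v6 v7 v8 where zs: "zs = [v0, v1, v2, v3, v4, v5, v6, v7, v8]"
      by (auto simp: length_Suc_conv numeral_eq_Suc)
    ultimately show False
      by (intro no_path9[OF cat, of v0 v1 v2 v3 v4 v5 v6 v7 v8]) (simp_all add: zs)
  qed
qed

lemma no_long_cycle_with_pendant_path:
  assumes cat: "cat_at_most E 3" and C: "cycle E (x # vs)" "4 \<le> length (x # vs)"
    and P: "walk E (x # ps)" "distinct (x # ps)" "set ps \<inter> set vs = {}"
      "6 \<le> length (x # vs) + length ps"
  shows False
proof -
  have d: "distinct (x # vs)" and w: "walk E (x # vs @ [x])"
    using C(1) by (auto simp: cycle_def)
  have "length (x # vs) \<le> 5"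
    using cycle_length_le_5[OF cat C(1)] .
  with C(2) have "3 \<le> length vs" "length vs \<le> 4"
    by simp_all
  then consider "length vs = 3" | "length vs = 4"
    by linarith
  then show False
  proof cases
    case 1
    then obtain b c d where vs: "vs = [b, c, d]"
      by (auto simp: length_Suc_conv numeral_eq_Suc)
    from 1 P(4) have "2 \<le> length ps"
      by simp
    then obtain p q ps' where ps: "ps = p # q # ps'"
      by (auto simp: Suc_le_length_iff numeral_eq_Suc)
    show False
      by (rule no_cycle4_pendant_path2[OF cat, of x b c d p q])
        (use d w P in \<open>auto simp: vs ps insert_commute\<close>)
  next
    case 2
    then obtain b c d e where vs: "vs = [b, c, d, e]"
      by (auto simp: length_Suc_conv numeral_eq_Suc)
    from 2 P(4) obtain p ps' where ps: "ps = p # ps'"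
      by (cases ps) auto
    show False
      by (rule no_cycle5_pendant_edge[OF cat, of x b c d e p])
        (use d w P in \<open>auto simp: vs ps insert_commute\<close>)
  qed
qed

lemma no_triangle_with_long_pendant_path:
  assumes cat: "cat_at_most E 3" and C: "cycle E [x, y, z]"
    and P: "walk E (x # ps)" "distinct (x # ps)" "y \<notin> set ps" "z \<notin> set ps" "5 \<le> length ps"
  shows False
proof -
  from P(5) obtain p1 p2 p3 p4 p5 ps' where ps: "ps = p1 # p2 # p3 # p4 # p5 # ps'"
    by (auto simp: Suc_le_length_iff numeral_eq_Suc)
  show False
    by (rule no_triangle_pendant_path5[OF cat, of x y z p1 p2 p3 p4 p5])
      (use C P in \<open>auto simp: ps cycle_def insert_commute\<close>)
qed

text \<open>An ear of the cycle \<open>vs\<close> is a chord \<open>{x, t}\<close> (if \<open>ys = []\<close>), a path from \<open>x\<close> to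
  another vertex \<open>t\<close> of the cycle through new vertices \<open>ys\<close>, or a cycle through \<open>x\<close> alone
  (if \<open>t = x\<close>).\<close>
definition ear :: "'a set set \<Rightarrow> 'a list \<Rightarrow> 'a \<Rightarrow> 'a list \<Rightarrow> 'a \<Rightarrow> bool" where
  "ear E vs x ys t \<longleftrightarrow> x \<in> set vs \<and> t \<in> set vs \<and> set ys \<inter> set vs = {} \<and> distinct (x # ys) \<and>
     walk E (x # ys @ [t]) \<and> (ys = [] \<longrightarrow> {x, t} \<notin> cycle_edges vs) \<and> (t = x \<longrightarrow> 2 \<le> length ys)"

lemma cycle_rotate_to_edge:
  assumes "cycle E ws" "e \<in> cycle_edges ws"
  obtains a b rest where "cycle E (a # b # rest)" "set (a # b # rest) = set ws" "e = {a, b}"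
proof -
  from assms(2) obtain i where i: "i < length ws" "e = {ws ! i, ws ! ((i + 1) mod length ws)}"
    unfolding cycle_edges_conv_nth by blast
  define r where "r = rotate i ws"
  have "2 < length ws"
    using assms(1) by (simp add: cycle_def)
  then have "2 < length r"
    by (simp add: r_def)
  then obtain a b rest where r: "r = a # b # rest"
    by (cases r; cases "tl r") auto
  have "ws \<noteq> []"
    using \<open>2 < length ws\<close> by auto
  then have "a = ws ! i" "b = ws ! ((i + 1) mod length ws)"
    using \<open>2 < length ws\<close> i(1) nth_rotate[of 0 ws i] nth_rotate[of 1 ws i]
    by (simp_all add: r r_def[symmetric])
  moreover have "cycle E r" "set r = set ws"
    using cycle_rotate[OF assms(1)] by (simp_all add: r_def)
  ultimately show ?thesis
    using i(2) by (intro that[of a b rest]) (simp_all add: r)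
qed

lemma cycle_rotate_to_leaving_edge:
  assumes C: "cycle E vs" and D: "cycle E ws" and "\<not> cycle_edges ws \<subseteq> cycle_edges vs"
    and "set vs \<inter> set ws \<noteq> {}"
  obtains x y rest where "cycle E (x # y # rest)" "set (x # y # rest) = set ws" "x \<in> set vs"
    "{x, y} \<notin> cycle_edges vs"
proof -
  from assms(3) obtain e where "e \<in> cycle_edges ws" "e \<notin> cycle_edges vs"
    by blast
  from D \<open>e \<in> cycle_edges ws\<close> obtain a b rest where r: "cycle E (a # b # rest)"
    "set (a # b # rest) = set ws" "e = {a, b}"
    by (rule cycle_rotate_to_edge)
  with \<open>e \<notin> cycle_edges vs\<close> have "{a, b} \<notin> cycle_edges vs"
    by simp
  show ?thesis
  proof (cases "a \<in> set vs")
    case True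
    show ?thesis
      by (rule that[OF r(1,2) True \<open>{a, b} \<notin> cycle_edges vs\<close>])
  next
    case False
    \<comment> \<open>start at the last vertex of \<open>vs\<close> on the cycle; its successor is not on \<open>vs\<close>\<close>
    have "\<exists>z\<in>set (a # b # rest). z \<in> set vs"
      using assms(4) r(2) by blast
    then obtain as x zs where split: "a # b # rest = as @ x # zs" "x \<in> set vs"
      "\<forall>z\<in>set zs. z \<notin> set vs"
      using split_list_last_prop[of "a # b # rest" "\<lambda>z. z \<in> set vs"] by blast
    with False obtain a' as' where as: "as = a' # as'" "a' \<notin> set vs"
      by (cases as) auto
    obtain y rest' where y: "zs @ as = y # rest'" "y \<notin> set vs"
      using split(3) as by (cases zs) auto
    have rot: "rotate (length as) (a # b # rest) = x # y # rest'"
      by (simp add: split(1) rotate_append y(1))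
    have "cycle E (x # y # rest')" "set (x # y # rest') = set ws"
      using cycle_rotate[OF r(1), of "length as"] r(2) set_rotate[of "length as" "a # b # rest"]
      unfolding rot by simp_all
    moreover have "{x, y} \<notin> cycle_edges vs"
      using y(2) cycle_edges_subset_set by blast
    ultimately show ?thesis
      using that split(2) by blast
  qed
qed

lemma cycle_ear:
  assumes "cycle E vs" "cycle E ws" "\<not> cycle_edges ws \<subseteq> cycle_edges vs" "set vs \<inter> set ws \<noteq> {}"
  obtains x ys t where "ear E vs x ys t"
proof -
  obtain x y rest where r: "cycle E (x # y # rest)" "set (x # y # rest) = set ws" "x \<in> set vs"
    "{x, y} \<notin> cycle_edges vs"
    by (rule cycle_rotate_to_leaving_edge[OF assms])
  have d: "distinct (x # y # rest)" and w: "walk E (x # y # rest @ [x])"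
    using r(1) by (simp_all add: cycle_def)
  have "\<exists>z\<in>set (y # rest @ [x]). z \<in> set vs"
    using r(3) by simp
  then obtain ys t zs where split: "y # rest @ [x] = ys @ t # zs" "t \<in> set vs"
    "\<forall>z\<in>set ys. z \<notin> set vs"
    using split_list_first_prop[of "y # rest @ [x]" "\<lambda>z. z \<in> set vs"] by blast
  have walk: "walk E (x # ys @ [t])"
    using w walk_prefix[of E "x # ys @ [t]" zs] split(1) by simp
  have "distinct (y # rest @ [x])"
    using d by auto
  with split(1) have "distinct (ys @ t # zs)"
    by simp
  then have "distinct (x # ys)"
    using split(3) r(3) by auto
  moreover have "ys = [] \<Longrightarrow> {x, t} \<notin> cycle_edges vs"
    using split(1) r(4) by simp
  moreover have "2 \<le> length ys" if "t = x"
  proof -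
    have "zs = []"
    proof (rule ccontr)
      assume "zs \<noteq> []"
      moreover have "last (y # rest @ [x]) = last (ys @ t # zs)"
        using split(1) by simp
      ultimately have "x \<in> set zs"
        using last_in_set by fastforce
      with \<open>distinct (ys @ t # zs)\<close> that show False
        by simp
    qed
    with split(1) that have "ys = y # rest"
      by simp
    with r(1) show ?thesis
      by (simp add: cycle_def)
  qed
  ultimately have "ear E vs x ys t"
    unfolding ear_def using r(3) split(2,3) walk by blast
  then show ?thesis by (rule that)
qed

lemma no_ear_on_cycle5:
  assumes cat: "cat_at_most E 3" and C: "cycle E [x, b, c, d, e]"
    and ear: "ear E [x, b, c, d, e] x ys t"
  shows False
proof (cases ys)
  case Nil
  with ear have "t \<in> {c, d}" and xt: "{x, t} \<in> E"
    unfolding ear_def cycle_edges_def by (auto simp: insert_commute)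
  then consider (c) "t = c" | (d) "t = d" by blast
  then show False
  proof cases
    case c
    show False
      by (rule no_house[OF cat, of x b c d e]) (use C xt c in \<open>simp_all add: cycle_def\<close>)
  next
    case d
    show False
      by (rule no_house[OF cat, of x e d c b])
        (use C xt d in \<open>auto simp: cycle_def insert_commute\<close>)
  qed
next
  case (Cons y ys')
  show False
  proof (rule no_long_cycle_with_pendant_path[OF cat C, of ys])
    show "walk E (x # ys)" "distinct (x # ys)" "set ys \<inter> set [b, c, d, e] = {}"
      using ear walk_prefix[of E "x # ys" "[t]"] unfolding ear_def by auto
  qed (simp_all add: Cons)
qed

lemma no_ear_on_cycle4:
  assumes cat: "cat_at_most E 3" and C: "cycle E [x, b, c, d]" and ear: "ear E [x, b, c, d] x ys t"
  shows False
proof -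
  have dist: "distinct [x, b, c, d]" and w: "walk E [x, b, c, d, x]"
    using C by (simp_all add: cycle_def)
  consider (chord) "ys = []" | (path1) y where "ys = [y]" | (long) "2 \<le> length ys"
    by (cases ys; cases "tl ys") auto
  then show False
  proof cases
    case chord
    with ear have "t = c" "{x, t} \<in> E"
      unfolding ear_def cycle_edges_def by (auto simp: insert_commute)
    then show False
      using no_diamond[OF cat dist] w by (auto simp: insert_commute)
  next
    case path1
    with ear have t: "t \<in> {b, c, d}" and y: "y \<notin> {x, b, c, d}" "{x, y} \<in> E" "{y, t} \<in> E"
      unfolding ear_def by auto
    from t consider (b) "t = b" | (c) "t = c" | (d) "t = d" by blast
    then show False
    proof cases
      case b
      show False
        by (rule no_house[OF cat, of x y b c d])
          (use dist w y b in \<open>auto simp: insert_commute\<close>)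
    next
      case c
      show False
        by (rule no_K23[OF cat, of x c b d y])
          (use dist w y c in \<open>auto simp: insert_commute\<close>)
    next
      case d
      show False
        by (rule no_house[OF cat, of x y d c b])
          (use dist w y d in \<open>auto simp: insert_commute\<close>)
    qed
  next
    case long
    show False
    proof (rule no_long_cycle_with_pendant_path[OF cat C, of ys])
      show "walk E (x # ys)" "distinct (x # ys)" "set ys \<inter> set [b, c, d] = {}"
        using ear walk_prefix[of E "x # ys" "[t]"] unfolding ear_def by auto
    qed (use long in simp_all)
  qed
qed

lemma no_long_ear_on_triangle:
  assumes cat: "cat_at_most E 3" and C: "cycle E [x, b, c]" and ear: "ear E [x, b, c] x ys t"
    and long: "3 \<le> length ys"
  shows False
proof -
  have d: "distinct [x, b, c]" and w: "walk E [x, b, c, x]"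
    using C by (simp_all add: cycle_def)
  have t: "t \<in> {x, b, c}" and ys: "set ys \<inter> {x, b, c} = {}" "distinct (x # ys)"
    and walk: "walk E (x # ys @ [t])"
    using ear unfolding ear_def by auto
  have too_long: False if "cycle E (x # ys @ [t, u])" for u
    using long cycle_length_le_5[OF cat that] by simp
  from t consider (x) "t = x" | (b) "t = b" | (c) "t = c" by blast
  then show False
  proof cases
    case x
    with walk ys long have "cycle E (x # ys)"
      unfolding cycle_def by auto
    then show False
    proof (rule no_long_cycle_with_pendant_path[OF cat, where ps = "[b, c]"])
      show "walk E [x, b, c]" "distinct [x, b, c]" "set [b, c] \<inter> set ys = {}"
        using w d ys by auto
    qed (use long in simp_all)
  next
    case b
    have "walk E (x # ys @ [b, c, x])"
      using walk_join[of E "x # ys" b "[c, x]"] walk w b by simp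
    with d ys b have "cycle E (x # ys @ [t, c])"
      unfolding cycle_def by auto
    then show False by (rule too_long)
  next
    case c
    have "walk E (x # ys @ [c, b, x])"
      using walk_join[of E "x # ys" c "[b, x]"] walk w d c by (auto simp: insert_commute)
    with d ys c have "cycle E (x # ys @ [t, b])"
      unfolding cycle_def by auto
    then show False by (rule too_long)
  qed
qed

lemma no_ear_on_triangle:
  assumes cat: "cat_at_most E 3" and C: "cycle E [x, b, c]" and ear: "ear E [x, b, c] x ys t"
  shows False
proof -
  have d: "distinct [x, b, c]" and w: "walk E [x, b, c, x]"
    using C by (simp_all add: cycle_def)
  have t: "t \<in> {x, b, c}" and ys: "set ys \<inter> {x, b, c} = {}" "distinct (x # ys)"
    and walk: "walk E (x # ys @ [t])"
    using ear unfolding ear_def by auto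
  consider (chord) "ys = []" | (path1) y where "ys = [y]" | (path2) y z where "ys = [y, z]"
    | (long) "3 \<le> length ys"
    by (cases ys; cases "tl ys"; cases "tl (tl ys)") auto
  then show False
  proof cases
    case chord
    with ear show False
      unfolding ear_def cycle_edges_def by (auto simp: insert_commute)
  next
    case path1
    with ear have "t \<in> {b, c}"
      unfolding ear_def by auto
    then consider "t = b" | "t = c" by blast
    then show False
    proof cases
      case 1
      show False
        by (rule no_diamond[OF cat, of x y b c])
          (use d w ys walk path1 1 in \<open>auto simp: insert_commute\<close>)
    next
      case 2
      show False
        by (rule no_diamond[OF cat, of x y c b])
          (use d w ys walk path1 2 in \<open>auto simp: insert_commute\<close>)
    qed
  next
    case path2
    from t consider "t = x" | "t = b" | "t = c" by blast
    then show False
    proof cases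
      case 1
      show False
        by (rule no_bowtie[OF cat, of b c x y z])
          (use d w ys walk path2 1 in \<open>auto simp: insert_commute\<close>)
    next
      case 2
      show False
        by (rule no_house[OF cat, of b c x y z])
          (use d w ys walk path2 2 in \<open>auto simp: insert_commute\<close>)
    next
      case 3
      show False
        by (rule no_house[OF cat, of c b x y z])
          (use d w ys walk path2 3 in \<open>auto simp: insert_commute\<close>)
    qed
  next
    case long
    with cat C ear show False
      by (rule no_long_ear_on_triangle)
  qed
qed

lemma no_ear:
  assumes cat: "cat_at_most E 3" and C: "cycle E vs" and ear: "ear E vs x ys t"
  shows False
proof -
  have "x \<in> set vs"
    using ear by (simp add: ear_def)
  with C obtain rest where r: "cycle E (x # rest)" "cycle_edges (x # rest) = cycle_edges vs"
    "set (x # rest) = set vs"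
    by (rule cycle_rotate_to)
  with ear have ear': "ear E (x # rest) x ys t"
    unfolding ear_def by simp
  have "3 \<le> length (x # rest)" "length (x # rest) \<le> 5"
    using r(1) cycle_length_le_5[OF cat r(1)] by (simp_all add: cycle_def)
  then consider "length rest = 2" | "length rest = 3" | "length rest = 4"
    by force
  then show False
  proof cases
    case 1
    then obtain b c where "rest = [b, c]"
      by (auto simp: length_Suc_conv numeral_eq_Suc)
    with r(1) ear' show False
      using no_ear_on_triangle[OF cat] by simp
  next
    case 2
    then obtain b c d where "rest = [b, c, d]"
      by (auto simp: length_Suc_conv numeral_eq_Suc)
    with r(1) ear' show False
      using no_ear_on_cycle4[OF cat] by simp
  next
    case 3
    then obtain b c d e where "rest = [b, c, d, e]"
      by (auto simp: length_Suc_conv numeral_eq_Suc)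
    with r(1) ear' show False
      using no_ear_on_cycle5[OF cat] by simp
  qed
qed

lemma walk_set_subset_Union: "walk E xs \<Longrightarrow> 2 \<le> length xs \<Longrightarrow> set xs \<subseteq> \<Union>E"
proof (induction xs rule: induct_list012)
  case (3 x y zs)
  then have "{x, y} \<in> E" by simp
  moreover have "set (y # zs) \<subseteq> \<Union>E"
  proof (cases zs)
    case Nil
    with \<open>{x, y} \<in> E\<close> show ?thesis by auto
  next
    case Cons
    with 3 show ?thesis by simp
  qed
  ultimately show ?case by auto
qed auto

lemma cycle_set_subset:
  assumes "simple_graph V E" "cycle E vs"
  shows "set vs \<subseteq> V"
proof -
  have "set (vs @ [hd vs]) \<subseteq> \<Union>E"
    using assms(2) by (intro walk_set_subset_Union) (auto simp: cycle_def)
  then show ?thesis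
    using simple_graph_edge_subset[OF assms(1)] by auto
qed

lemma disjoint_cycle_is_triangle:
  assumes cat: "cat_at_most E 3" and C: "cycle E (a # vs)" and D: "cycle E (b # ws)"
    and disj: "set (a # vs) \<inter> set (b # ws) = {}"
    and P: "walk E (a # ps @ [b])" "distinct (a # ps @ [b])"
      "set ps \<inter> (set (a # vs) \<union> set (b # ws)) = {}"
  shows "length vs = 2"
proof (rule ccontr)
  assume "length vs \<noteq> 2"
  with C have long: "4 \<le> length (a # vs)"
    by (simp add: cycle_def)
  obtain w ws' where ws: "ws = w # ws'"
    using D by (cases ws) (auto simp: cycle_def)
  with D have "walk E [b, w]" "b \<noteq> w"
    by (simp_all add: cycle_def)
  show False
  proof (rule no_long_cycle_with_pendant_path[OF cat C long, of "ps @ [b, w]"])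
    show "walk E (a # ps @ [b, w])"
      using walk_join[of E "a # ps" b "[w]"] P(1) \<open>walk E [b, w]\<close> by simp
    show "distinct (a # ps @ [b, w])" "set (ps @ [b, w]) \<inter> set vs = {}"
      using P(2,3) disj \<open>b \<noteq> w\<close> by (auto simp: ws)
  qed (use long in simp)
qed

lemma triangles_joined_by_edge:
  assumes cat: "cat_at_most E 3" and C: "cycle E [a, b, c]" and D: "cycle E [x, y, z]"
    and disj: "{a, b, c} \<inter> {x, y, z} = {}"
    and P: "walk E (a # ps @ [x])" "distinct (a # ps @ [x])" "set ps \<inter> {a, b, c, x, y, z} = {}"
  shows "ps = []"
proof (rule ccontr)
  assume "ps \<noteq> []"
  then consider (one) m where "ps = [m]" | (long) "2 \<le> length ps"
    by (cases ps; cases "tl ps") auto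
  then show False
  proof cases
    case one
    show False
      by (rule no_triangles_joined_by_path2[OF cat, of a b c m x y z])
        (use C D disj P one in \<open>auto simp: cycle_def insert_commute\<close>)
  next
    case long
    have "walk E (c # b # a # ps @ [x])"
      using walk_join[of E "[c, b]" a "ps @ [x]"] P(1) C by (auto simp: cycle_def insert_commute)
    then have "walk E (x # rev ps @ [a, b, c])"
      using walk_rev[of E "c # b # a # ps @ [x]"] by simp
    then show False
      by (rule no_triangle_with_long_pendant_path[OF cat D])
        (use C disj P long in \<open>auto simp: cycle_def\<close>)
  qed
qed

lemma two_triangles_no_pendant_edge:
  assumes cat: "cat_at_most E 3" and d: "distinct [a, b, c, x, y, z]"
    and E: "{a, b} \<in> E" "{b, c} \<in> E" "{c, a} \<in> E" "{x, y} \<in> E" "{y, z} \<in> E" "{z, x} \<in> E"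
      "{a, x} \<in> E"
    and p: "p \<in> {a, b, c}" and q: "q \<notin> {a, b, c, x, y, z}"
  shows "{p, q} \<notin> E"
proof
  assume pq: "{p, q} \<in> E"
  from p consider (a) "p = a" | (b) "p = b" | (c) "p = c" by blast
  then show False
  proof cases
    case a
    show False
      by (rule no_triangle_pendant_edge_and_path3[OF cat, of a b c q x y z])
        (use d E pq a q in \<open>auto simp: insert_commute\<close>)
  next
    case b
    show False
      by (rule no_triangle_pendant_edge_and_path2[OF cat, of b a c q x y])
        (use d E pq b q in \<open>auto simp: insert_commute\<close>)
  next
    case c
    show False
      by (rule no_triangle_pendant_edge_and_path2[OF cat, of c a b q x y])
        (use d E pq c q in \<open>auto simp: insert_commute\<close>)
  qed
qed

lemma two_triangles_no_chord:
  assumes cat: "cat_at_most E 3" and d: "distinct [a, b, c, x, y, z]"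
    and E: "{a, b} \<in> E" "{b, c} \<in> E" "{c, a} \<in> E" "{x, y} \<in> E" "{y, z} \<in> E" "{z, x} \<in> E"
      "{a, x} \<in> E"
    and pq: "p \<in> {a, b, c}" "q \<in> {x, y, z}" "{p, q} \<in> E"
  shows "p = a \<and> q = x"
proof (rule ccontr)
  assume "\<not> (p = a \<and> q = x)"
  with pq(1,2) consider (a_y) "p = a" "q = y" | (a_z) "p = a" "q = z" | (b_x) "p = b" "q = x"
    | (c_x) "p = c" "q = x" | (b_y) "p = b" "q = y" | (b_z) "p = b" "q = z"
    | (c_y) "p = c" "q = y" | (c_z) "p = c" "q = z"
    by blast
  then show False
  proof cases
    case a_y
    show False
      by (rule no_diamond[OF cat, of x z y a]) (use d E pq a_y in \<open>auto simp: insert_commute\<close>)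
  next
    case a_z
    show False
      by (rule no_diamond[OF cat, of x y z a]) (use d E pq a_z in \<open>auto simp: insert_commute\<close>)
  next
    case b_x
    show False
      by (rule no_diamond[OF cat, of b x a c]) (use d E pq b_x in \<open>auto simp: insert_commute\<close>)
  next
    case c_x
    show False
      by (rule no_diamond[OF cat, of c x a b]) (use d E pq c_x in \<open>auto simp: insert_commute\<close>)
  next
    case b_y
    show False
      by (rule no_triangle_pendant_edge_and_path2[OF cat, of y x z b a c])
        (use d E pq b_y in \<open>auto simp: insert_commute\<close>)
  next
    case b_z
    show False
      by (rule no_triangle_pendant_edge_and_path2[OF cat, of z x y b a c])
        (use d E pq b_z in \<open>auto simp: insert_commute\<close>)
  next
    case c_y
    show False
      by (rule no_triangle_pendant_edge_and_path2[OF cat, of y x z c a b])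
        (use d E pq c_y in \<open>auto simp: insert_commute\<close>)
  next
    case c_z
    show False
      by (rule no_triangle_pendant_edge_and_path2[OF cat, of z x y c a b])
        (use d E pq c_z in \<open>auto simp: insert_commute\<close>)
  qed
qed

lemma triangle_doubleton:
  "p \<in> {a, b, c} \<Longrightarrow> q \<in> {a, b, c} \<Longrightarrow> p \<noteq> q \<Longrightarrow> {p, q} \<in> {{a, b}, {b, c}, {a, c}}"
  by (auto simp: insert_commute)

lemma two_triangles_edge_at_triangle:
  assumes cat: "cat_at_most E 3" and d: "distinct [a, b, c, x, y, z]"
    and E: "{a, b} \<in> E" "{b, c} \<in> E" "{c, a} \<in> E" "{x, y} \<in> E" "{y, z} \<in> E" "{z, x} \<in> E"
      "{a, x} \<in> E"
    and pq: "p \<in> {a, b, c}" "p \<noteq> q" "{p, q} \<in> E"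
  shows "q \<in> {a, b, c, x, y, z} \<and> {p, q} \<in> {{a, b}, {b, c}, {a, c}, {a, x}}"
proof -
  have "q \<in> {a, b, c, x, y, z}"
    using two_triangles_no_pendant_edge[OF cat d E pq(1), of q] pq(3) by blast
  then consider "q \<in> {a, b, c}" | "q \<in> {x, y, z}" by blast
  then show ?thesis
  proof cases
    case 1
    show ?thesis
    proof
      show "q \<in> {a, b, c, x, y, z}"
        using 1 by blast
      have "{p, q} \<in> {{a, b}, {b, c}, {a, c}}"
        by (rule triangle_doubleton[OF pq(1) 1 pq(2)])
      then show "{p, q} \<in> {{a, b}, {b, c}, {a, c}, {a, x}}"
        by (rule subsetD[rotated]) blast
    qed
  next
    case 2
    with two_triangles_no_chord[OF cat d E pq(1) 2 pq(3)] show ?thesis by simp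
  qed
qed

lemma graph_eq_two_triangles_joined_by_edge:
  assumes G: "simple_graph V E" and conn: "connected_graph V E" and cat: "cat_at_most E 3"
    and d: "distinct [a, b, c, x, y, z]"
    and E: "{a, b} \<in> E" "{b, c} \<in> E" "{c, a} \<in> E" "{x, y} \<in> E" "{y, z} \<in> E" "{z, x} \<in> E"
      "{a, x} \<in> E"
  shows "V = {a, b, c, x, y, z} \<and> E = {{a, b}, {b, c}, {a, c}, {x, y}, {y, z}, {x, z}, {a, x}}"
proof -
  let ?S = "{a, b, c, x, y, z}"
  let ?E = "{{a, b}, {b, c}, {a, c}, {x, y}, {y, z}, {x, z}, {a, x}}"
  have edge: "q \<in> ?S \<and> {p, q} \<in> ?E" if "p \<in> ?S" "p \<noteq> q" "{p, q} \<in> E" for p q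
  proof (cases "p \<in> {a, b, c}")
    case True
    note edge = two_triangles_edge_at_triangle[OF cat d E True that(2,3)]
    show ?thesis
    proof
      show "q \<in> ?S"
        using edge by (rule conjunct1)
      from edge have "{p, q} \<in> {{a, b}, {b, c}, {a, c}, {a, x}}"
        by (rule conjunct2)
      then show "{p, q} \<in> ?E"
        by (rule subsetD[rotated]) simp
    qed
  next
    case False
    with that(1) have p: "p \<in> {x, y, z}" by blast
    have d': "distinct [x, y, z, a, b, c]"
      using d by auto
    have xa: "{x, a} \<in> E"
      using E(7) by (simp add: insert_commute)
    note edge = two_triangles_edge_at_triangle[OF cat d' E(4-6,1-3) xa p that(2,3)]
    show ?thesis
    proof
      from edge have "q \<in> {x, y, z, a, b, c}"
        by (rule conjunct1)
      then show "q \<in> ?S"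
        by blast
      from edge have "{p, q} \<in> {{x, y}, {y, z}, {x, z}, {x, a}}"
        by (rule conjunct2)
      then show "{p, q} \<in> ?E"
        by (rule subsetD[rotated]) (simp add: insert_commute)
    qed
  qed
  have "?S \<subseteq> V"
    using E simple_graph_edge_subset[OF G] by blast
  moreover have "V \<subseteq> ?S"
  proof
    fix q
    assume "q \<in> V"
    show "q \<in> ?S"
    proof (rule ccontr)
      assume "q \<notin> ?S"
      then obtain p q' where "p \<in> ?S" "q' \<notin> ?S" "{p, q'} \<in> E"
        using edge_leaving_if_connected[OF conn, of a ?S q] \<open>q \<in> V\<close> \<open>?S \<subseteq> V\<close> by blast
      moreover from \<open>p \<in> ?S\<close> \<open>q' \<notin> ?S\<close> have "p \<noteq> q'"
        by blast
      ultimately show False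
        using edge by blast
    qed
  qed
  moreover have "E \<subseteq> ?E"
  proof
    fix e
    assume "e \<in> E"
    with G obtain p q where pq: "p \<noteq> q" "p \<in> V" "e = {p, q}"
      unfolding simple_graph_def by blast
    with \<open>V \<subseteq> ?S\<close> have "p \<in> ?S"
      by blast
    from edge[OF this pq(1)] \<open>e \<in> E\<close> show "e \<in> ?E"
      by (simp add: pq(3))
  qed
  moreover have "?E \<subseteq> E"
    using E by (simp add: insert_commute)
  ultimately show ?thesis
    by blast
qed

lemma disjoint_cycles_two_triangles:
  assumes G: "simple_graph V E" and conn: "connected_graph V E" and cat: "cat_at_most E 3"
    and C: "cycle E vs" and D: "cycle E ws" and disj: "set vs \<inter> set ws = {}"
  obtains a b c x y z where "distinct [a, b, c, x, y, z]"
    "{a, b} \<in> E" "{b, c} \<in> E" "{c, a} \<in> E" "{x, y} \<in> E" "{y, z} \<in> E" "{z, x} \<in> E" "{a, x} \<in> E"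
proof -
  have "vs \<noteq> []" "ws \<noteq> []"
    using C D by (auto simp: cycle_def)
  then have "hd vs \<in> set vs" "hd ws \<in> set ws"
    by simp_all
  then have "hd vs \<in> V" "hd ws \<in> V" "hd vs \<noteq> hd ws"
    using cycle_set_subset[OF G C] cycle_set_subset[OF G D] disj by auto
  with conn have "reach E (hd vs) (hd ws)"
    unfolding connected_graph_def by blast
  then obtain qs where qs: "walk E (hd vs # qs)" "qs \<noteq> []" "last qs = hd ws"
    by (rule walk_of_reach)
  obtain a ps x where P: "a \<in> set vs" "x \<in> set ws" "set ps \<inter> (set vs \<union> set ws) = {}"
    "distinct (a # ps @ [x])" "walk E (a # ps @ [x])"
    by (rule walk_between_disjoint_sets[OF disj, of E "hd vs # qs"])
      (use qs \<open>vs \<noteq> []\<close> \<open>ws \<noteq> []\<close> in auto)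
  obtain vs' where C': "cycle E (a # vs')" "set (a # vs') = set vs"
    using cycle_rotate_to[OF C P(1)] by metis
  obtain ws' where D': "cycle E (x # ws')" "set (x # ws') = set ws"
    using cycle_rotate_to[OF D P(2)] by metis
  have "length vs' = 2"
    by (rule disjoint_cycle_is_triangle[OF cat C'(1) D'(1)]) (use disj C' D' P in auto)
  then obtain b c where vs': "vs' = [b, c]"
    by (auto simp: length_Suc_conv numeral_eq_Suc)
  have "length ws' = 2"
    by (rule disjoint_cycle_is_triangle[OF cat D'(1) C'(1), of "rev ps"])
      (use disj C' D' P walk_rev[of E "a # ps @ [x]"] in auto)
  then obtain y z where ws': "ws' = [y, z]"
    by (auto simp: length_Suc_conv numeral_eq_Suc)
  have "ps = []"
    by (rule triangles_joined_by_edge[OF cat, of a b c x y z])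
      (use disj C' D' P in \<open>auto simp: vs' ws'\<close>)
  have "distinct [a, b, c, x, y, z]"
    using C' D' disj by (auto simp: vs' ws' cycle_def)
  moreover have "walk E [a, b, c, a]" "walk E [x, y, z, x]" "walk E [a, x]"
    using C'(1) D'(1) P(5) \<open>ps = []\<close> by (simp_all add: vs' ws' cycle_def)
  ultimately show ?thesis
    using that by (simp add: insert_commute)
qed

theorem mainTheorem7:
  fixes V :: "'a set" and E :: "'a set set"
  assumes "simple_graph V E"
    and "connected_graph V E"
    and "\<exists>C1 C2. is_cycle E C1 \<and> is_cycle E C2 \<and> C1 \<noteq> C2"
    and "cat_num V E = 3"
  shows "card V = 6 \<and>
    (\<exists>a b c x y z. distinct [a, b, c, x, y, z] \<and> V = {a, b, c, x, y, z} \<and>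
       E = {{a, b}, {b, c}, {a, c}, {x, y}, {y, z}, {x, z}, {a, x}})"
proof -
  have cat: "cat_at_most E 3"
    using cat_at_most_if_cat_num_le[OF assms(1)] assms(4) by simp
  obtain vs ws where C: "cycle E vs" and D: "cycle E ws"
    and new_edge: "\<not> cycle_edges ws \<subseteq> cycle_edges vs"
  proof -
    from assms(3) obtain C1 C2 where C12: "is_cycle E C1" "is_cycle E C2" "C1 \<noteq> C2"
      by blast
    obtain vs where vs: "cycle E vs" "C1 = cycle_edges vs"
      using C12(1) by (rule cycle_if_is_cycle)
    obtain ws where ws: "cycle E ws" "C2 = cycle_edges ws"
      using C12(2) by (rule cycle_if_is_cycle)
    show thesis
    proof (cases "cycle_edges ws \<subseteq> cycle_edges vs")
      case True
      with C12(3) vs(2) ws(2) have "\<not> cycle_edges vs \<subseteq> cycle_edges ws"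
        by blast
      with ws(1) vs(1) show thesis
        by (rule that)
    next
      case False
      with vs(1) ws(1) show thesis
        by (rule that)
    qed
  qed
  have "set vs \<inter> set ws = {}"
  proof (rule ccontr)
    assume "set vs \<inter> set ws \<noteq> {}"
    with C D new_edge obtain x ys t where "ear E vs x ys t"
      by (rule cycle_ear)
    with cat C show False
      by (rule no_ear)
  qed
  then obtain a b c x y z where d: "distinct [a, b, c, x, y, z]"
    and E: "{a, b} \<in> E" "{b, c} \<in> E" "{c, a} \<in> E" "{x, y} \<in> E" "{y, z} \<in> E" "{z, x} \<in> E"
      "{a, x} \<in> E"
    by (rule disjoint_cycles_two_triangles[OF assms(1,2) cat C D])
  have VE: "V = {a, b, c, x, y, z} \<and> E = {{a, b}, {b, c}, {a, c}, {x, y}, {y, z}, {x, z}, {a, x}}"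
    by (rule graph_eq_two_triangles_joined_by_edge[OF assms(1,2) cat d E])
  then have "card V = 6"
    using distinct_card[OF d] by simp
  with d VE show ?thesis
    by blast
qed

end
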